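(* Let $\Phi\colon M_2(\mathbb C)\to M_2(\mathbb C)$ be a BJ isomorphism and let $\phi\colon\mathbb C^2\to\mathbb C^2$ be a bijection which maps orthonormal pairs onto orthonormal pairs and satisfies $\Phi(xy^\ast)\doteq\phi(x)\phi(y)^\ast$ for all $x,y\in\mathbb C^2$. Let $A=xy^\ast+\sigma x'(y')^\ast$, where $\{x,x'\}$ and $\{y,y'\}$ are orthonormal bases of $\mathbb C^2$ and $\sigma\in\mathbb C$ with $|\sigma|<1$. Then there exists $\tau\in\mathbb C$ with $|\tau|<1$ such that $\Phi(A)\doteq\phi(x)\phi(y)^\ast+\tau\,\phi(x')\phi(y')^\ast$.
   Context: $M_2(\mathbb C)$ carries the operator (spectral) norm. $X\perp Y$ (Birkhoff–James orthogonality) means $\|X+\lambda Y\|\ge\|X\|$ for all $\lambda\in\mathbb C$. A BJ isomorphism is a bijection $\Phi$ with $X\perp Y\iff\Phi(X)\perp\Phi(Y)$. $X\doteq Y$ means $\mathbb C X=\mathbb C Y$, i.e. $X$ and $Y$ are equal up to a nonzero scalar factor. *)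

theory Defs
  imports "HOL-Analysis.Analysis"
begin

type_synonym cvec = "complex ^ 2"
type_synonym cmat = "complex ^ 2 ^ 2"

definition cinner :: "cvec \<Rightarrow> cvec \<Rightarrow> complex" where
  "cinner x y = (\<Sum>i\<in>UNIV. x $ i * cnj (y $ i))"

definition orthonormal_pair :: "cvec \<Rightarrow> cvec \<Rightarrow> bool" where
  "orthonormal_pair x y \<longleftrightarrow> norm x = 1 \<and> norm y = 1 \<and> cinner x y = 0"

definition outer :: "cvec \<Rightarrow> cvec \<Rightarrow> cmat" where
  "outer x y = (\<chi> i j. x $ i * cnj (y $ j))"

definition mscale :: "complex \<Rightarrow> cmat \<Rightarrow> cmat" where
  "mscale c A = (\<chi> i j. c * A $ i $ j)"

definition opnorm :: "cmat \<Rightarrow> real" where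
  "opnorm A = onorm (\<lambda>v. A *v v)"

definition bj_orth :: "cmat \<Rightarrow> cmat \<Rightarrow> bool" where
  "bj_orth X Y \<longleftrightarrow> (\<forall>l::complex. opnorm (X + mscale l Y) \<ge> opnorm X)"

definition bj_iso :: "(cmat \<Rightarrow> cmat) \<Rightarrow> bool" where
  "bj_iso \<Phi> \<longleftrightarrow> bij \<Phi> \<and> (\<forall>X Y. bj_orth X Y \<longleftrightarrow> bj_orth (\<Phi> X) (\<Phi> Y))"

definition proj_eq :: "cmat \<Rightarrow> cmat \<Rightarrow> bool" where
  "proj_eq X Y \<longleftrightarrow> range (\<lambda>c. mscale c X) = range (\<lambda>c. mscale c Y)"

end

(*
  If B has a nonzero (x, y) entry, then A - (t / B_xy) B
  has norm < 1 = ||A|| for small t > 0, so A is not orthogonal to B; if that entry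
  vanishes, the (x, y) entry of A + l B stays 1 and A is orthogonal to B. So A and x y^*
  have the same Birkhoff-James orthogonal set {B. B_xy = 0}, and a BJ isomorphism
  carries this to the orthogonal set of the image of x y^*, a multiple of phi x (phi y)^*.
  Conversely, a matrix C whose orthogonal set is {D. D_ab = 0} attains its norm at the
  entry C_ab; this forces C to be diagonal in the bases {a, a'}, {b, b'}, and
  |C_a'b'| = |C_ab| is impossible because then C would be orthogonal to
  a b^* - (C_a'b' / C_ab) a' b'^*.
*)

theory Submission
  imports Defs
begin

lemma cvec_eq_iff: "(u::cvec) = v \<longleftrightarrow> u$1 = v$1 \<and> u$2 = v$2"
  by (simp add: vec_eq_iff forall_2)

lemma cmat_eq_iff:
  "(M::cmat) = N \<longleftrightarrow> M$1$1 = N$1$1 \<and> M$1$2 = N$1$2 \<and> M$2$1 = N$2$1 \<and> M$2$2 = N$2$2"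
  by (simp add: vec_eq_iff forall_2)

lemma cinner_add_left: "cinner (u + v) w = cinner u w + cinner v w"
  and cinner_add_right: "cinner w (u + v) = cinner w u + cinner w v"
  and cinner_scale_left: "cinner (c *s u) w = c * cinner u w"
  and cinner_scale_right: "cinner w (c *s u) = cnj c * cinner w u"
  and cinner_commute: "cinner u w = cnj (cinner w u)"
  by (simp_all add: cinner_def sum_2 algebra_simps)

lemma cinner_self: "cinner v v = of_real (norm v ^ 2)"
  by (simp add: cinner_def sum_2 norm_vec_def L2_set_def flip: complex_norm_square)

lemma norm_cinner_le: "cmod (cinner u w) \<le> norm u * norm w"
proof -
  have "cmod (cinner u w) \<le> (\<Sum>i\<in>UNIV. \<bar>cmod (u$i)\<bar> * \<bar>cmod (w$i)\<bar>)"
    unfolding cinner_def by (rule order_trans[OF norm_sum]) (simp add: norm_mult)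
  also have "\<dots> \<le> norm u * norm w"
    unfolding norm_vec_def by (rule L2_set_mult_ineq)
  finally show ?thesis .
qed

lemma orthonormal_pair_cinner:
  assumes "orthonormal_pair x x'"
  shows "cinner x x = 1" "cinner x' x' = 1" "cinner x x' = 0" "cinner x' x = 0"
  using assms cinner_commute[of x' x] by (auto simp: orthonormal_pair_def cinner_self)

lemma outer_add_outer_eq_mat_1:
  assumes "orthonormal_pair x x'"
  shows "outer x x + outer x' x' = mat 1"
proof -
  \<comment> \<open>\<open>R\<close> has rows \<open>x, x'\<close>; orthonormality gives \<open>R R\<^sup>* = 1\<close>, and a one-sided inverse of a
    square matrix is two-sided.\<close>
  define R :: cmat where "R = (\<chi> k j. if k = 1 then x $ j else x' $ j)"
  define R' :: cmat where "R' = (\<chi> j k. cnj (R $ k $ j))"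
  have "R ** R' = mat 1"
    using orthonormal_pair_cinner[OF assms]
    by (simp add: cmat_eq_iff R_def R'_def matrix_matrix_mult_def mat_def cinner_def sum_2)
  then have "R' ** R = mat 1"
    by (rule matrix_left_right_inverse1)
  then show ?thesis
    by (simp add: cmat_eq_iff R_def R'_def matrix_matrix_mult_def outer_def mat_def sum_2 mult.commute)
qed

lemma outer_mult_vector: "outer u v *v w = cinner w v *s u"
  by (simp add: cvec_eq_iff outer_def matrix_vector_mult_def cinner_def sum_2 algebra_simps)

lemma mscale_mult_vector: "mscale c M *v v = c *s (M *v v)"
  by (simp add: cvec_eq_iff mscale_def matrix_vector_mult_def sum_2 algebra_simps)

lemma mscale_0_left [simp]: "mscale 0 M = 0"
  and mscale_0_right [simp]: "mscale c 0 = 0"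
  and mscale_1 [simp]: "mscale 1 M = M"
  and mscale_mscale: "mscale c (mscale d M) = mscale (c * d) M"
  and mscale_add_right: "mscale c (M + N) = mscale c M + mscale c N"
  by (simp_all add: cmat_eq_iff mscale_def algebra_simps)

lemma orthonormal_expansion:
  assumes "orthonormal_pair x x'"
  shows "w = cinner w x *s x + cinner w x' *s x'"
proof -
  have "w = (outer x x + outer x' x') *v w"
    by (simp add: outer_add_outer_eq_mat_1[OF assms])
  then show ?thesis
    by (simp add: matrix_vector_mult_add_rdistrib outer_mult_vector)
qed

lemma parseval:
  assumes "orthonormal_pair x x'"
  shows "cinner u w = cinner u x * cnj (cinner w x) + cinner u x' * cnj (cinner w x')"
  using cinner_commute[of x w] cinner_commute[of x' w]
  by (subst orthonormal_expansion[OF assms, of u]) (simp add: cinner_add_left cinner_scale_left)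

lemma norm_sq_parseval:
  assumes "orthonormal_pair x x'"
  shows "norm u ^ 2 = cmod (cinner u x) ^ 2 + cmod (cinner u x') ^ 2"
proof -
  have "of_real (norm u ^ 2) = (of_real (cmod (cinner u x) ^ 2 + cmod (cinner u x') ^ 2) :: complex)"
    unfolding cinner_self[symmetric] parseval[OF assms, of u u]
    by (simp only: of_real_add complex_norm_square)
  then show ?thesis
    by (simp only: of_real_eq_iff)
qed

definition matrix_element :: "cmat \<Rightarrow> cvec \<Rightarrow> cvec \<Rightarrow> complex" where
  "matrix_element M u v = cinner (M *v v) u"

lemma matrix_element_add: "matrix_element (M + N) u v = matrix_element M u v + matrix_element N u v"
  and matrix_element_mscale: "matrix_element (mscale c M) u v = c * matrix_element M u v"
  and matrix_element_outer: "matrix_element (outer p q) u v = cinner v q * cinner p u"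
  by (simp_all add: matrix_element_def matrix_vector_mult_add_rdistrib mscale_mult_vector
      outer_mult_vector cinner_add_left cinner_scale_left)

lemma norm_column_sq:
  assumes "orthonormal_pair x x'"
  shows "norm (M *v v) ^ 2 = cmod (matrix_element M x v) ^ 2 + cmod (matrix_element M x' v) ^ 2"
  unfolding matrix_element_def by (rule norm_sq_parseval[OF assms])

lemma matrix_outer_expansion:
  assumes "orthonormal_pair x x'" "orthonormal_pair y y'"
  shows "M = mscale (matrix_element M x y) (outer x y) + mscale (matrix_element M x y') (outer x y')
           + mscale (matrix_element M x' y) (outer x' y) + mscale (matrix_element M x' y') (outer x' y')"
  (is "M = ?E")
proof (subst matrix_eq, intro allI)
  fix v
  have column: "M *v w = matrix_element M x w *s x + matrix_element M x' w *s x'" for w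
    unfolding matrix_element_def by (rule orthonormal_expansion[OF assms(1)])
  have "M *v v = M *v (cinner v y *s y + cinner v y' *s y')"
    by (subst orthonormal_expansion[OF assms(2), of v]) (rule refl)
  also have "\<dots> = cinner v y *s (M *v y) + cinner v y' *s (M *v y')"
    by (simp add: matrix_vector_right_distrib vector_scalar_commute)
  finally show "M *v v = ?E *v v"
    by (simp add: matrix_vector_mult_add_rdistrib matrix_vector_right_distrib mscale_mult_vector
        outer_mult_vector column cvec_eq_iff algebra_simps)
qed

lemma norm_vector_scale: "norm (c *s (w::cvec)) = cmod c * norm w"
proof -
  have "norm (c *s w) ^ 2 = (cmod c * norm w) ^ 2"
    by (simp add: norm_vec_def L2_set_def sum_2 norm_mult power_mult_distrib algebra_simps)
  then show ?thesis
    by (rule power2_eq_imp_eq) simp_all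
qed

lemma norm_add_sq: "norm (u + w) ^ 2 = norm u ^ 2 + norm w ^ 2 + 2 * Re (cinner u w)"
proof -
  have "of_real (norm (u + w) ^ 2) = cinner (u + w) (u + w)"
    by (simp only: cinner_self)
  also have "\<dots> = cinner u u + cinner w w + (cinner u w + cnj (cinner u w))"
    using cinner_commute[of w u] by (simp add: cinner_add_left cinner_add_right)
  finally show ?thesis
    by (simp add: cinner_self complex_add_cnj complex_eq_iff)
qed

lemma norm_mult_vector_le_opnorm: "norm (M *v v) \<le> opnorm M * norm v"
  unfolding opnorm_def by (rule onorm[OF matrix_vector_mul_bounded_linear])

lemma opnorm_nonneg: "0 \<le> opnorm M"
  unfolding opnorm_def by (rule onorm_pos_le[OF matrix_vector_mul_bounded_linear])

lemma opnorm_leI: "(\<And>v. norm (M *v v) \<le> c * norm v) \<Longrightarrow> opnorm M \<le> c"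
  unfolding opnorm_def by (rule onorm_le)

lemma opnorm_eq_0_iff: "opnorm M = 0 \<longleftrightarrow> M = 0"
  unfolding opnorm_def onorm_eq_0[OF matrix_vector_mul_bounded_linear]
  by (simp add: matrix_eq)

lemma opnorm_mscale: "opnorm (mscale c M) = cmod c * opnorm M"
proof -
  have le: "opnorm (mscale d N) \<le> cmod d * opnorm N" for d N
  proof (rule opnorm_leI)
    fix v
    show "norm (mscale d N *v v) \<le> cmod d * opnorm N * norm v"
      using mult_left_mono[OF norm_mult_vector_le_opnorm[of N v], of "cmod d"]
      by (simp add: mscale_mult_vector norm_vector_scale mult.assoc)
  qed
  show ?thesis
  proof (cases "c = 0")
    case False
    have "opnorm M = opnorm (mscale (inverse c) (mscale c M))"
      using False by (simp add: mscale_mscale)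
    also have "\<dots> \<le> cmod (inverse c) * opnorm (mscale c M)"
      by (rule le)
    finally have "cmod c * opnorm M \<le> opnorm (mscale c M)"
      using False by (simp add: norm_divide field_simps)
    with le[of c M] show ?thesis
      by simp
  qed (simp add: opnorm_eq_0_iff)
qed

lemma opnorm_outer_le: "opnorm (outer u w) \<le> norm u * norm w"
proof (rule opnorm_leI)
  fix v
  show "norm (outer u w *v v) \<le> norm u * norm w * norm v"
    using mult_left_mono[OF norm_cinner_le[of v w], of "norm u"]
    by (simp add: outer_mult_vector norm_vector_scale algebra_simps)
qed

lemma norm_matrix_element_le: "cmod (matrix_element M u v) \<le> opnorm M * norm u * norm v"
proof -
  have "cmod (matrix_element M u v) \<le> norm (M *v v) * norm u"
    unfolding matrix_element_def by (rule norm_cinner_le)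
  also have "\<dots> \<le> opnorm M * norm v * norm u"
    by (rule mult_right_mono[OF norm_mult_vector_le_opnorm]) simp
  finally show ?thesis
    by (simp add: algebra_simps)
qed

lemma quadratic_form_ge:
  fixes A B G a b :: real
  assumes "0 \<le> A" "0 \<le> B" "G\<^sup>2 \<le> A * B"
  shows "2 * G * a * b \<le> A * a\<^sup>2 + B * b\<^sup>2"
proof (cases "A = 0")
  case True
  then show ?thesis
    using assms by simp
next
  case False
  have "A * (A * a\<^sup>2 + B * b\<^sup>2 - 2 * G * a * b) = (A * a - G * b)\<^sup>2 + (A * B - G\<^sup>2) * b\<^sup>2"
    by (simp add: power2_eq_square algebra_simps)
  also have "\<dots> \<ge> 0"
    using assms by simp
  finally show ?thesis
    using False assms(1) by (simp add: zero_le_mult_iff)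
qed

text \<open>The hypotheses say that \<open>s I - M\<^sup>* M\<close>, written in the basis \<open>y, y'\<close>, is positive semidefinite.\<close>

lemma opnorm_le_sqrt_of_columns:
  assumes "orthonormal_pair y y'"
    and "norm (M *v y) ^ 2 \<le> s" "norm (M *v y') ^ 2 \<le> s"
    and "cmod (cinner (M *v y) (M *v y')) ^ 2 \<le> (s - norm (M *v y) ^ 2) * (s - norm (M *v y') ^ 2)"
  shows "opnorm M \<le> sqrt s"
proof (rule opnorm_leI)
  fix v
  define a b where "a = cinner v y" and "b = cinner v y'"
  define g where "g = cinner (M *v y) (M *v y')"
  have "M *v v = a *s (M *v y) + b *s (M *v y')"
    unfolding a_def b_def
    by (subst orthonormal_expansion[OF assms(1), of v])
       (simp add: matrix_vector_right_distrib vector_scalar_commute)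
  then have expand: "norm (M *v v) ^ 2
      = cmod a ^ 2 * norm (M *v y) ^ 2 + cmod b ^ 2 * norm (M *v y') ^ 2 + 2 * Re (a * cnj b * g)"
    by (simp add: g_def norm_add_sq norm_vector_scale cinner_scale_left cinner_scale_right
        power_mult_distrib mult.assoc algebra_simps)
  have "Re (a * cnj b * g) \<le> cmod g * cmod a * cmod b"
    using complex_Re_le_cmod[of "a * cnj b * g"] by (simp add: norm_mult mult_ac)
  moreover have "2 * cmod g * cmod a * cmod b
      \<le> (s - norm (M *v y) ^ 2) * cmod a ^ 2 + (s - norm (M *v y') ^ 2) * cmod b ^ 2"
    using assms(2-4) by (intro quadratic_form_ge) (simp_all add: g_def)
  moreover have "s * norm v ^ 2 = s * cmod a ^ 2 + s * cmod b ^ 2"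
    unfolding a_def b_def norm_sq_parseval[OF assms(1)] by (rule distrib_left)
  ultimately have "norm (M *v v) ^ 2 \<le> s * norm v ^ 2"
    unfolding expand by (simp add: algebra_simps)
  then have "norm (M *v v) \<le> sqrt (s * norm v ^ 2)"
    by (rule real_le_rsqrt)
  then show "norm (M *v v) \<le> sqrt s * norm v"
    by (simp add: real_sqrt_mult)
qed

text \<open>These are the hypotheses of \<open>opnorm_le_sqrt_of_columns\<close>, with \<open>s = 1 - t\<close>, for the matrix
  whose \<open>(x, y), (x, y'), (x', y), (x', y')\<close> entries are \<open>1 - t, t p, t q, \<sigma> + t r\<close>.\<close>

lemma small_perturbation_bound:
  fixes \<sigma> p q r :: complex
  assumes "cmod \<sigma> < 1"
  obtains t :: real where "0 < t" "t < 1"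
    and "cmod (1 - t) ^ 2 + cmod (t * q) ^ 2 \<le> 1 - t"
    and "cmod (t * p) ^ 2 + cmod (\<sigma> + t * r) ^ 2 \<le> 1 - t"
    and "cmod ((1 - t) * cnj (t * p) + t * q * cnj (\<sigma> + t * r)) ^ 2
         \<le> (1 - t - (cmod (1 - t) ^ 2 + cmod (t * q) ^ 2)) * (1 - t - (cmod (t * p) ^ 2 + cmod (\<sigma> + t * r) ^ 2))"
proof -
  \<comment> \<open>The slack of the first column bound and the cross term both carry a factor \<open>t\<close>;
    after dividing it out, all bounds hold at \<open>t = 0\<close> with room to spare.\<close>
  define f1 where "f1 t = 1 - t - t * cmod q ^ 2" for t :: real
  define f2 where "f2 t = 1 - t - (cmod (t * p) ^ 2 + cmod (\<sigma> + t * r) ^ 2)" for t :: real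
  define \<gamma> where "\<gamma> t = (1 - t) * cnj p + q * cnj (\<sigma> + t * r)" for t :: real
  have pos: "1 - cmod \<sigma> ^ 2 > 0"
    using assms by (simp add: power_less_one_iff abs_square_less_1)
  have "(f1 \<longlongrightarrow> 1) (at_right 0)" "(f2 \<longlongrightarrow> 1 - cmod \<sigma> ^ 2) (at_right 0)"
    "((\<lambda>t. f1 t * f2 t - t * cmod (\<gamma> t) ^ 2) \<longlongrightarrow> 1 - cmod \<sigma> ^ 2) (at_right 0)"
    unfolding f1_def f2_def \<gamma>_def by (auto intro!: tendsto_eq_intros)
  then have "\<forall>\<^sub>F t in at_right 0. 0 < f1 t" "\<forall>\<^sub>F t in at_right 0. 0 < f2 t"
    "\<forall>\<^sub>F t in at_right 0. 0 < f1 t * f2 t - t * cmod (\<gamma> t) ^ 2"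
    using pos by (auto intro: order_tendstoD(1) simp del: diff_gt_0_iff_gt)
  moreover have "\<forall>\<^sub>F t in at_right 0. 0 < t \<and> t < (1::real)"
    by (auto simp: eventually_at_right_field intro: exI[of _ 1])
  ultimately have "\<forall>\<^sub>F t in at_right 0. 0 < t \<and> t < 1 \<and> 0 < f1 t \<and> 0 < f2 t
      \<and> t * cmod (\<gamma> t) ^ 2 < f1 t * f2 t"
    by eventually_elim auto
  then obtain t where "0 < t" "t < 1" "0 < f1 t" "0 < f2 t" "t * cmod (\<gamma> t) ^ 2 < f1 t * f2 t"
    using eventually_happens'[OF trivial_limit_at_right_real] by blast
  have H1: "1 - t - (cmod (1 - t) ^ 2 + cmod (t * q) ^ 2) = t * f1 t"
  proof -
    have "cmod (1 - t) ^ 2 = (1 - t) ^ 2"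
      by (simp only: norm_of_real power2_abs)
    then show ?thesis
      using \<open>0 < t\<close> by (simp add: f1_def norm_mult power2_eq_square algebra_simps)
  qed
  have H2: "1 - t - (cmod (t * p) ^ 2 + cmod (\<sigma> + t * r) ^ 2) = f2 t"
    by (simp add: f2_def)
  have "(1 - t) * cnj (t * p) + t * q * cnj (\<sigma> + t * r) = t * \<gamma> t"
    by (simp add: \<gamma>_def algebra_simps)
  then have "cmod ((1 - t) * cnj (t * p) + t * q * cnj (\<sigma> + t * r)) ^ 2 = t * (t * cmod (\<gamma> t) ^ 2)"
    using \<open>0 < t\<close> by (simp add: norm_mult power2_eq_square)
  also have "\<dots> \<le> t * f1 t * f2 t"
    using \<open>0 < t\<close> \<open>t * cmod (\<gamma> t) ^ 2 < f1 t * f2 t\<close> by simp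
  finally have "cmod ((1 - t) * cnj (t * p) + t * q * cnj (\<sigma> + t * r)) ^ 2 \<le> t * f1 t * f2 t" .
  moreover have "0 < t * f1 t"
    using \<open>0 < t\<close> \<open>0 < f1 t\<close> by simp
  ultimately show ?thesis
    using \<open>0 < f2 t\<close> H1 H2 by (intro that[OF \<open>0 < t\<close> \<open>t < 1\<close>]) (simp_all add: mult.assoc)
qed

lemma opnorm_diagonal:
  assumes "orthonormal_pair x x'" "orthonormal_pair y y'" "cmod \<sigma> \<le> 1"
  shows "opnorm (outer x y + mscale \<sigma> (outer x' y')) = 1"
proof (rule antisym)
  let ?A = "outer x y + mscale \<sigma> (outer x' y')"
  note cinner_xy = orthonormal_pair_cinner[OF assms(1)] orthonormal_pair_cinner[OF assms(2)]
  have "?A *v y = x" "?A *v y' = \<sigma> *s x'"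
    using cinner_xy by (simp_all add: matrix_vector_mult_add_rdistrib mscale_mult_vector outer_mult_vector)
  moreover have "norm x = 1" "norm x' = 1"
    using assms(1) by (simp_all add: orthonormal_pair_def)
  ultimately have "opnorm ?A \<le> sqrt 1"
    using assms(3) cinner_xy
    by (intro opnorm_le_sqrt_of_columns[OF assms(2)])
       (simp_all add: norm_vector_scale cinner_scale_right power_le_one)
  then show "opnorm ?A \<le> 1"
    by simp
  have "matrix_element ?A x y = 1"
    using cinner_xy by (simp add: matrix_element_add matrix_element_mscale matrix_element_outer)
  then show "1 \<le> opnorm ?A"
    using norm_matrix_element_le[of ?A x y] assms(1,2) by (simp add: orthonormal_pair_def)
qed

lemma bj_orth_diagonal_iff:
  assumes xx: "orthonormal_pair x x'" and yy: "orthonormal_pair y y'" and "cmod \<sigma> < 1"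
  shows "bj_orth (outer x y + mscale \<sigma> (outer x' y')) B \<longleftrightarrow> matrix_element B x y = 0"
proof
  define A where "A = outer x y + mscale \<sigma> (outer x' y')"
  note cinner_xy = orthonormal_pair_cinner[OF xx] orthonormal_pair_cinner[OF yy]
  have opnorm_A: "opnorm A = 1"
    unfolding A_def using assms by (intro opnorm_diagonal) simp_all
  have elements_A: "matrix_element (A + mscale l B) x y = 1 + l * matrix_element B x y"
    "matrix_element (A + mscale l B) x y' = l * matrix_element B x y'"
    "matrix_element (A + mscale l B) x' y = l * matrix_element B x' y"
    "matrix_element (A + mscale l B) x' y' = \<sigma> + l * matrix_element B x' y'" for l
    using cinner_xy by (simp_all add: A_def matrix_element_add matrix_element_mscale matrix_element_outer)
  show "matrix_element B x y = 0" if "bj_orth A B"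
  proof (rule ccontr)
    assume b: "matrix_element B x y \<noteq> 0"
    define p q r where "p = - matrix_element B x y' / matrix_element B x y"
      and "q = - matrix_element B x' y / matrix_element B x y"
      and "r = - matrix_element B x' y' / matrix_element B x y"
    obtain t :: real where t: "0 < t" "t < 1"
      and bounds: "cmod (1 - t) ^ 2 + cmod (t * q) ^ 2 \<le> 1 - t"
        "cmod (t * p) ^ 2 + cmod (\<sigma> + t * r) ^ 2 \<le> 1 - t"
        "cmod ((1 - t) * cnj (t * p) + t * q * cnj (\<sigma> + t * r)) ^ 2
         \<le> (1 - t - (cmod (1 - t) ^ 2 + cmod (t * q) ^ 2)) * (1 - t - (cmod (t * p) ^ 2 + cmod (\<sigma> + t * r) ^ 2))"
      by (rule small_perturbation_bound[OF assms(3)])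
    define M where "M = A + mscale (- t / matrix_element B x y) B"
    have elements_M: "matrix_element M x y = 1 - t" "matrix_element M x y' = t * p"
      "matrix_element M x' y = t * q" "matrix_element M x' y' = \<sigma> + t * r"
      using b by (simp_all add: M_def elements_A p_def q_def r_def)
    have "cinner (M *v y) (M *v y') = matrix_element M x y * cnj (matrix_element M x y')
        + matrix_element M x' y * cnj (matrix_element M x' y')"
      unfolding matrix_element_def by (rule parseval[OF xx])
    then have "opnorm M \<le> sqrt (1 - t)"
      using bounds unfolding elements_M
      by (intro opnorm_le_sqrt_of_columns[OF yy]) (simp_all only: norm_column_sq[OF xx] elements_M)
    also have "\<dots> < opnorm A"
      using t opnorm_A by simp
    finally show False
      using that unfolding bj_orth_def M_def by (metis not_le)
  qed
  show "bj_orth A B" if "matrix_element B x y = 0"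
    unfolding bj_orth_def
  proof
    fix l
    show "opnorm A \<le> opnorm (A + mscale l B)"
      using norm_matrix_element_le[of "A + mscale l B" x y] that xx yy opnorm_A
      by (simp add: elements_A orthonormal_pair_def)
  qed
qed

lemma opnorm_eq_matrix_element:
  assumes "norm a = 1" "norm b = 1" and orth: "\<And>D. matrix_element D a b = 0 \<Longrightarrow> bj_orth C D"
  shows "opnorm C = cmod (matrix_element C a b)"
proof (rule antisym)
  define c where "c = matrix_element C a b"
  have "cinner a a = 1" "cinner b b = 1"
    using assms(1,2) by (simp_all add: cinner_self)
  then have "matrix_element (mscale c (outer a b) + mscale (- 1) C) a b = 0"
    by (simp add: c_def matrix_element_add matrix_element_mscale matrix_element_outer)
  then have "opnorm C \<le> opnorm (C + mscale 1 (mscale c (outer a b) + mscale (- 1) C))"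
    using orth unfolding bj_orth_def by blast
  also have "C + mscale 1 (mscale c (outer a b) + mscale (- 1) C) = mscale c (outer a b)"
    by (simp add: cmat_eq_iff mscale_def)
  also have "opnorm (mscale c (outer a b)) \<le> cmod c"
    using opnorm_outer_le[of a b] assms(1,2) by (simp add: opnorm_mscale mult_left_le)
  finally show "opnorm C \<le> cmod (matrix_element C a b)"
    by (simp add: c_def)
  show "cmod (matrix_element C a b) \<le> opnorm C"
    using norm_matrix_element_le[of C a b] assms(1,2) by simp
qed

lemma diagonal_if_opnorm_eq_matrix_element:
  assumes aa: "orthonormal_pair a a'" and bb: "orthonormal_pair b b'"
    and norm_C: "opnorm C = cmod (matrix_element C a b)"
  shows "matrix_element C a b' = 0" "matrix_element C a' b = 0"
    "cmod (matrix_element C a' b') \<le> cmod (matrix_element C a b)"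
proof -
  define c11 c12 c21 c22 where "c11 = matrix_element C a b" and "c12 = matrix_element C a b'"
    and "c21 = matrix_element C a' b" and "c22 = matrix_element C a' b'"
  have unit: "norm a = 1" "norm b = 1" "norm b' = 1"
    using aa bb by (simp_all add: orthonormal_pair_def)
  have column_bound: "norm (C *v v) ^ 2 \<le> cmod c11 ^ 2 * norm v ^ 2" for v
    using norm_mult_vector_le_opnorm[of C v] norm_C
    by (simp add: c11_def power_mult_distrib[symmetric] power_mono)
  show "c21 = 0"
    using column_bound[of b] norm_column_sq[OF aa, of C b] unit by (simp add: c11_def c21_def)
  show "c12 = 0"
  proof -
    \<comment> \<open>\<open>v = C\<^sup>* a\<close>\<close>
    define v where "v = cnj c11 *s b + cnj c12 *s b'"
    define N where "N = cmod c11 ^ 2 + cmod c12 ^ 2"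
    have "cinner v b = cnj c11" "cinner v b' = cnj c12"
      using orthonormal_pair_cinner[OF bb] by (simp_all add: v_def cinner_add_left cinner_scale_left)
    then have "norm v ^ 2 = N"
      by (simp add: N_def norm_sq_parseval[OF bb])
    have "matrix_element C a v = c11 * cnj c11 + c12 * cnj c12"
      by (simp add: v_def c11_def c12_def matrix_element_def matrix_vector_right_distrib
          vector_scalar_commute cinner_add_left cinner_scale_left mult.commute)
    also have "\<dots> = of_real N"
      by (simp add: N_def flip: complex_norm_square)
    finally have "matrix_element C a v = of_real N" .
    have "0 \<le> N"
      by (simp add: N_def)
    have "norm v = sqrt N"
      using \<open>norm v ^ 2 = N\<close> by (metis norm_ge_zero real_sqrt_unique)
    then have "sqrt N * sqrt N \<le> cmod c11 * sqrt N"
      using norm_matrix_element_le[of C a v] norm_C unit \<open>0 \<le> N\<close> \<open>matrix_element C a v = of_real N\<close>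
      by (simp add: c11_def)
    then have "sqrt N \<le> cmod c11"
      using mult_le_cancel_right[of "sqrt N" "sqrt N" "cmod c11"] \<open>0 \<le> N\<close>
      by (cases "N = 0") auto
    then have "N \<le> cmod c11 ^ 2"
      using power_mono[of "sqrt N" "cmod c11" 2] \<open>0 \<le> N\<close> by simp
    then show ?thesis
      by (simp add: N_def)
  qed
  then show "cmod c22 \<le> cmod c11"
    using column_bound[of b'] norm_column_sq[OF aa, of C b'] unit
    by (simp add: c12_def c22_def flip: abs_le_square_iff)
qed

definition bj_orth_set :: "cmat \<Rightarrow> cmat set" where
  "bj_orth_set A = {B. bj_orth A B}"

lemma bj_orth_set_diagonal:
  assumes "orthonormal_pair x x'" "orthonormal_pair y y'" "cmod \<sigma> < 1"
  shows "bj_orth_set (outer x y + mscale \<sigma> (outer x' y')) = {B. matrix_element B x y = 0}"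
  using bj_orth_diagonal_iff[OF assms] by (auto simp: bj_orth_set_def)

lemma bj_orth_set_outer:
  assumes "orthonormal_pair x x'" "orthonormal_pair y y'"
  shows "bj_orth_set (outer x y) = {B. matrix_element B x y = 0}"
  using bj_orth_set_diagonal[OF assms, of 0] by simp

lemma bj_orth_set_eq_imp_diagonal:
  assumes aa: "orthonormal_pair a a'" and bb: "orthonormal_pair b b'"
    and orth: "bj_orth_set C = {D. matrix_element D a b = 0}"
  shows "\<exists>c \<tau>. c \<noteq> 0 \<and> cmod \<tau> < 1 \<and> C = mscale c (outer a b + mscale \<tau> (outer a' b'))"
proof -
  define c11 c22 where "c11 = matrix_element C a b" and "c22 = matrix_element C a' b'"
  have orth_iff: "bj_orth C D \<longleftrightarrow> matrix_element D a b = 0" for D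
    using orth by (auto simp: bj_orth_set_def)
  note cinner_ab = orthonormal_pair_cinner[OF aa] orthonormal_pair_cinner[OF bb]
  have unit: "norm a = 1" "norm a' = 1" "norm b = 1" "norm b' = 1"
    using aa bb by (simp_all add: orthonormal_pair_def)
  have norm_C: "opnorm C = cmod c11"
    unfolding c11_def using unit orth_iff by (intro opnorm_eq_matrix_element) simp_all
  note diagonal = diagonal_if_opnorm_eq_matrix_element[OF aa bb norm_C[unfolded c11_def]]
  have "c11 \<noteq> 0"
  proof
    assume "c11 = 0"
    then have "C = 0"
      using norm_C opnorm_eq_0_iff by simp
    then have "bj_orth C (outer a b)"
      using opnorm_eq_0_iff[of 0] by (simp add: bj_orth_def opnorm_nonneg)
    then show False
      using orth_iff cinner_ab by (simp add: matrix_element_outer)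
  qed
  have "cmod c22 < cmod c11"
  proof (rule ccontr)
    assume "\<not> cmod c22 < cmod c11"
    then have "cmod c22 = cmod c11"
      using diagonal(3) by (simp add: c11_def c22_def)
    define \<omega> where "\<omega> = c22 / c11"
    have "cmod \<omega> = 1" "c22 = \<omega> * c11"
      using \<open>cmod c22 = cmod c11\<close> \<open>c11 \<noteq> 0\<close> by (simp_all add: \<omega>_def norm_divide)
    define D where "D = outer a b + mscale (- \<omega>) (outer a' b')"
    have "matrix_element D a b = 1"
      using cinner_ab by (simp add: D_def matrix_element_add matrix_element_mscale matrix_element_outer)
    then obtain l where l: "opnorm (C + mscale l D) < cmod c11"
      using orth_iff[of D] norm_C unfolding bj_orth_def by (auto simp: not_le)
    have "matrix_element (C + mscale l D) a b = c11 + l"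
      "matrix_element (C + mscale l D) a' b' = \<omega> * (c11 - l)"
      using cinner_ab \<open>c22 = \<omega> * c11\<close>
      by (simp_all add: D_def c11_def c22_def matrix_element_add matrix_element_mscale
          matrix_element_outer algebra_simps)
    then have "cmod (c11 + l) \<le> opnorm (C + mscale l D)" "cmod (c11 - l) \<le> opnorm (C + mscale l D)"
      using norm_matrix_element_le[of "C + mscale l D" a b] norm_matrix_element_le[of "C + mscale l D" a' b']
        unit \<open>cmod \<omega> = 1\<close> by (simp_all add: norm_mult)
    moreover have "2 * cmod c11 \<le> cmod (c11 + l) + cmod (c11 - l)"
      using norm_triangle_ineq[of "c11 + l" "c11 - l"] by simp
    ultimately show False
      using l by linarith
  qed
  have "C = mscale c11 (outer a b) + mscale c22 (outer a' b')"
    using matrix_outer_expansion[OF aa bb, of C] diagonal by (simp add: c11_def c22_def)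
  then have "C = mscale c11 (outer a b + mscale (c22 / c11) (outer a' b'))"
    using \<open>c11 \<noteq> 0\<close> by (simp add: mscale_add_right mscale_mscale)
  moreover have "cmod (c22 / c11) < 1"
    using \<open>c11 \<noteq> 0\<close> \<open>cmod c22 < cmod c11\<close> by (simp add: norm_divide)
  ultimately show ?thesis
    using \<open>c11 \<noteq> 0\<close> by blast
qed

lemma bj_orth_set_mscale:
  assumes "c \<noteq> 0"
  shows "bj_orth_set (mscale c M) = bj_orth_set M"
proof -
  have "mscale c M + mscale l D = mscale c (M + mscale (l / c) D)" for l D
    using assms by (simp add: cmat_eq_iff mscale_def field_simps)
  then have "bj_orth (mscale c M) D \<longleftrightarrow> (\<forall>l. opnorm M \<le> opnorm (M + mscale (l / c) D))" for D
    using assms by (simp add: bj_orth_def opnorm_mscale)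
  also have "(\<forall>l. opnorm M \<le> opnorm (M + mscale (l / c) D)) \<longleftrightarrow> bj_orth M D" for D
    unfolding bj_orth_def using assms by (metis nonzero_mult_div_cancel_right)
  finally show ?thesis
    by (simp add: bj_orth_set_def)
qed

lemma bj_iso_orth_set:
  assumes "bj_iso \<Phi>"
  shows "bj_orth_set (\<Phi> A) = \<Phi> ` bj_orth_set A"
proof (rule set_eqI)
  fix D
  have "bij \<Phi>" and orth: "\<And>B. bj_orth A B \<longleftrightarrow> bj_orth (\<Phi> A) (\<Phi> B)"
    using assms by (auto simp: bj_iso_def)
  moreover obtain B where "D = \<Phi> B"
    using \<open>bij \<Phi>\<close> by (metis bij_pointE)
  ultimately show "D \<in> bj_orth_set (\<Phi> A) \<longleftrightarrow> D \<in> \<Phi> ` bj_orth_set A"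
    by (simp add: bj_orth_set_def bij_is_inj inj_image_mem_iff)
qed

lemma outer_neq_0: "a \<noteq> 0 \<Longrightarrow> b \<noteq> 0 \<Longrightarrow> outer a b \<noteq> 0"
  by (auto simp: vec_eq_iff outer_def)

lemma proj_eq_imp_mscale:
  assumes "proj_eq X Y" "Y \<noteq> 0"
  obtains c where "c \<noteq> 0" "X = mscale c Y"
proof -
  have lines: "range (\<lambda>c. mscale c X) = range (\<lambda>c. mscale c Y)"
    using assms(1) by (simp add: proj_eq_def)
  have "X \<in> range (\<lambda>c. mscale c Y)" "Y \<in> range (\<lambda>c. mscale c X)"
    using lines rangeI[of "\<lambda>c. mscale c X" 1] rangeI[of "\<lambda>c. mscale c Y" 1] by simp_all
  then obtain c d where "X = mscale c Y" "Y = mscale d X"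
    by blast
  moreover have "c \<noteq> 0"
  proof
    assume "c = 0"
    then have "X = 0"
      using \<open>X = mscale c Y\<close> by simp
    then show False
      using assms(2) \<open>Y = mscale d X\<close> by simp
  qed
  ultimately show ?thesis
    using that by blast
qed

lemma proj_eq_mscale:
  assumes "c \<noteq> 0"
  shows "proj_eq (mscale c Y) Y"
proof -
  have "surj (\<lambda>d. d * c)"
    using assms by (intro surjI[of _ "\<lambda>d. d / c"]) simp
  have "range (\<lambda>d. mscale d (mscale c Y)) = (\<lambda>d. mscale d Y) ` range (\<lambda>d. d * c)"
    by (simp add: mscale_mscale image_image)
  also have "\<dots> = range (\<lambda>d. mscale d Y)"
    using \<open>surj (\<lambda>d. d * c)\<close> by (simp only:)
  finally show ?thesis
    by (simp add: proj_eq_def)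
qed

theorem lemma5p8:
  fixes \<Phi> :: "cmat \<Rightarrow> cmat" and \<phi> :: "cvec \<Rightarrow> cvec"
    and x x' y y' :: cvec and \<sigma> :: complex
  assumes "bj_iso \<Phi>"
    and "bij \<phi>"
    and "(\<lambda>(u, v). (\<phi> u, \<phi> v)) ` {(u, v). orthonormal_pair u v}
           = {(u, v). orthonormal_pair u v}"
    and "\<forall>u v. proj_eq (\<Phi> (outer u v)) (outer (\<phi> u) (\<phi> v))"
    and "orthonormal_pair x x'" and "orthonormal_pair y y'"
    and "cmod \<sigma> < 1"
  shows "\<exists>\<tau>::complex. cmod \<tau> < 1 \<and>
           proj_eq (\<Phi> (outer x y + mscale \<sigma> (outer x' y')))
                   (outer (\<phi> x) (\<phi> y) + mscale \<tau> (outer (\<phi> x') (\<phi> y')))"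
proof -
  \<comment> \<open>Only the forward inclusion of the orthonormal-pair hypothesis is needed; \<open>bij \<phi>\<close> is not.\<close>
  have \<phi>_pair: "orthonormal_pair (\<phi> u) (\<phi> v)" if "orthonormal_pair u v" for u v
  proof -
    have "(\<phi> u, \<phi> v) \<in> (\<lambda>(u, v). (\<phi> u, \<phi> v)) ` {(u, v). orthonormal_pair u v}"
      using that by force
    then show ?thesis
      using assms(3) by simp
  qed
  have \<phi>_pairs: "orthonormal_pair (\<phi> x) (\<phi> x')" "orthonormal_pair (\<phi> y) (\<phi> y')"
    using \<phi>_pair assms(5,6) by simp_all
  then have "outer (\<phi> x) (\<phi> y) \<noteq> 0"
    by (intro outer_neq_0) (auto simp: orthonormal_pair_def)
  then obtain c where "c \<noteq> 0" and c: "\<Phi> (outer x y) = mscale c (outer (\<phi> x) (\<phi> y))"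
    using proj_eq_imp_mscale[OF assms(4)[rule_format]] by blast
  have "bj_orth_set (\<Phi> (outer x y + mscale \<sigma> (outer x' y')))
      = \<Phi> ` bj_orth_set (outer x y + mscale \<sigma> (outer x' y'))"
    by (rule bj_iso_orth_set[OF assms(1)])
  also have "\<dots> = \<Phi> ` bj_orth_set (outer x y)"
    by (simp add: bj_orth_set_diagonal[OF assms(5-7)] bj_orth_set_outer[OF assms(5,6)])
  also have "\<dots> = bj_orth_set (mscale c (outer (\<phi> x) (\<phi> y)))"
    by (simp add: bj_iso_orth_set[OF assms(1)] flip: c)
  also have "\<dots> = {D. matrix_element D (\<phi> x) (\<phi> y) = 0}"
    by (simp add: bj_orth_set_mscale[OF \<open>c \<noteq> 0\<close>] bj_orth_set_outer[OF \<phi>_pairs])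
  finally obtain d \<tau> where "d \<noteq> 0" "cmod \<tau> < 1"
    and "\<Phi> (outer x y + mscale \<sigma> (outer x' y')) = mscale d (outer (\<phi> x) (\<phi> y) + mscale \<tau> (outer (\<phi> x') (\<phi> y')))"
    using bj_orth_set_eq_imp_diagonal[OF \<phi>_pairs] by blast
  then show ?thesis
    using proj_eq_mscale by metis
qed

end
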